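(* In the model of the context, if the lead time is deterministic, $L_t=L$ for all $t$ with a constant integer $L\ge0$, then $$BM=\left(\frac{2L^2}{n^2}+\frac{2L}{n}\right)(1-\rho^n)+1 .$$
   Context: Model. Fix $\mu_D\in\mathbb{R}$, $\rho\in(-1,1)$, and an i.i.d. sequence $(\epsilon_t)_{t\in\mathbb{Z}}$ with $E\epsilon_t=0$, $\operatorname{Var}\epsilon_t=\sigma^2\in(0,\infty)$. The demand $(D_t)$ is the stationary AR(1) process $D_t=\mu_D+\rho(D_{t-1}-\mu_D)+\epsilon_t$. Fix an integer $L^+\ge 0$ and integers $n,m\ge1$. Lead times $(L_t)$ take values in $\{0,\dots,L^+\}$. Forecasts: $\widehat{D}_t=\frac1n\sum_{i=1}^n D_{t-i}$, $\widehat{L}_t=\frac1m\sum_{i=1}^m L_{t-i-L^+}$; order $q_t=\widehat{L}_t\widehat{D}_t-\widehat{L}_{t-1}\widehat{D}_{t-1}+D_{t-1}$; $BM=\operatorname{Var}q_t/\operatorname{Var}D_t$. *)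

theory Defs
  imports "HOL-Probability.Probability"
begin

definition cov :: "'a measure \<Rightarrow> ('a \<Rightarrow> real) \<Rightarrow> ('a \<Rightarrow> real) \<Rightarrow> real" where
  "cov M X Y = integral\<^sup>L M (\<lambda>\<omega>. (X \<omega> - integral\<^sup>L M X) * (Y \<omega> - integral\<^sup>L M Y))"

definition weakly_stationary :: "'a measure \<Rightarrow> (int \<Rightarrow> 'a \<Rightarrow> real) \<Rightarrow> bool" where
  "weakly_stationary M X \<longleftrightarrow>
     (\<forall>t. X t \<in> borel_measurable M \<and> integrable M (\<lambda>\<omega>. (X t \<omega>)\<^sup>2)) \<and>
     (\<forall>s t. integral\<^sup>L M (X s) = integral\<^sup>L M (X t)) \<and>
     (\<forall>s t h. cov M (X (s + h)) (X s) = cov M (X (t + h)) (X t))"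

definition Dhat :: "nat \<Rightarrow> (int \<Rightarrow> 'a \<Rightarrow> real) \<Rightarrow> int \<Rightarrow> 'a \<Rightarrow> real" where
  "Dhat n D t \<omega> = (1 / real n) * (\<Sum>i=1..n. D (t - int i) \<omega>)"

definition Lhat :: "nat \<Rightarrow> nat \<Rightarrow> (int \<Rightarrow> 'a \<Rightarrow> nat) \<Rightarrow> int \<Rightarrow> 'a \<Rightarrow> real" where
  "Lhat m Lplus Lt t \<omega> = (1 / real m) * (\<Sum>i=1..m. real (Lt (t - int i - int Lplus) \<omega>))"

definition order_q :: "nat \<Rightarrow> nat \<Rightarrow> nat \<Rightarrow> (int \<Rightarrow> 'a \<Rightarrow> real) \<Rightarrow> (int \<Rightarrow> 'a \<Rightarrow> nat) \<Rightarrow> int \<Rightarrow> 'a \<Rightarrow> real" where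
  "order_q n m Lplus D Lt t \<omega> =
     Lhat m Lplus Lt t \<omega> * Dhat n D t \<omega> - Lhat m Lplus Lt (t - 1) \<omega> * Dhat n D (t - 1) \<omega> + D (t - 1) \<omega>"

end

theory Submission imports Defs begin

text \<open>With a constant lead time L the lead-time forecast is identically L, and the
  moving-average demand forecast telescopes, so that the order is
  q(t) = (1 + a) D(t-1) - a D(t-1-n) with a = L/n. Its variance is therefore
  ((1 + a)^2 + a^2) \<gamma>(0) - 2a(1 + a) \<gamma>(n) in terms of the autocovariances \<gamma> of D,
  and for a stationary AR(1) process \<gamma>(h) = \<rho>^h \<gamma>(0). This rests on the innovation
  \<epsilon>(s) being uncorrelated with every earlier demand D(u): iterating the recursion K times
  gives Cov(\<epsilon>(s), D(u)) = \<rho>^K Cov(\<epsilon>(s), D(u-K)), where the last covariance is bounded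
  by stationarity, so it vanishes because |\<rho>| < 1.\<close>

context prob_space begin

definition L2 :: "('a \<Rightarrow> real) \<Rightarrow> bool" where
  "L2 X \<longleftrightarrow> X \<in> borel_measurable M \<and> integrable M (\<lambda>\<omega>. (X \<omega>)\<^sup>2)"

lemma L2_imp_integrable: "L2 X \<Longrightarrow> integrable M X"
  unfolding L2_def by (blast dest: square_integrable_imp_integrable)

lemma integrable_mult_L2:
  assumes "L2 X" "L2 Y"
  shows "integrable M (\<lambda>\<omega>. X \<omega> * Y \<omega>)"
proof (rule Bochner_Integration.integrable_bound[where f="\<lambda>\<omega>. (X \<omega>)\<^sup>2 + (Y \<omega>)\<^sup>2"])
  show "integrable M (\<lambda>\<omega>. (X \<omega>)\<^sup>2 + (Y \<omega>)\<^sup>2)" "(\<lambda>\<omega>. X \<omega> * Y \<omega>) \<in> borel_measurable M"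
    using assms unfolding L2_def by auto
  have "\<bar>x * y\<bar> \<le> x\<^sup>2 + y\<^sup>2" for x y :: real
  proof -
    have "2 * \<bar>x\<bar> * \<bar>y\<bar> \<le> x\<^sup>2 + y\<^sup>2"
      using sum_squares_bound[of "\<bar>x\<bar>" "\<bar>y\<bar>"] by simp
    moreover have "0 \<le> \<bar>x\<bar> * \<bar>y\<bar>"
      by simp
    ultimately show ?thesis
      unfolding abs_mult by linarith
  qed
  then show "AE \<omega> in M. norm (X \<omega> * Y \<omega>) \<le> norm ((X \<omega>)\<^sup>2 + (Y \<omega>)\<^sup>2)"
    by simp
qed

lemma L2_affine:
  assumes "L2 X" "L2 Y"
  shows "L2 (\<lambda>\<omega>. c + a * X \<omega> + b * Y \<omega>)"
proof -
  have square: "(\<lambda>\<omega>. (c + a * X \<omega> + b * Y \<omega>)\<^sup>2) = (\<lambda>\<omega>. c\<^sup>2 + a\<^sup>2 * (X \<omega>)\<^sup>2 + b\<^sup>2 * (Y \<omega>)\<^sup>2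
     + (2*a*c) * X \<omega> + (2*b*c) * Y \<omega> + (2*a*b) * (X \<omega> * Y \<omega>))"
    by (simp add: power2_eq_square algebra_simps)
  show ?thesis
    using assms L2_imp_integrable[OF assms(1)] L2_imp_integrable[OF assms(2)] integrable_mult_L2[OF assms]
    unfolding L2_def square by auto
qed

lemma cov_eq_expectation:
  assumes "L2 X" "L2 Y"
  shows "cov M X Y = expectation (\<lambda>\<omega>. X \<omega> * Y \<omega>) - expectation X * expectation Y"
proof -
  have "(\<lambda>\<omega>. (X \<omega> - expectation X) * (Y \<omega> - expectation Y)) =
     (\<lambda>\<omega>. X \<omega> * Y \<omega> - expectation Y * X \<omega> - expectation X * Y \<omega> + expectation X * expectation Y)"
    by (simp add: algebra_simps)
  then show ?thesis
    using assms L2_imp_integrable integrable_mult_L2[OF assms] prob_space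
    unfolding cov_def by (simp add: algebra_simps)
qed

lemma cov_affine_left:
  assumes "L2 X" "L2 Y" "L2 Z"
  shows "cov M (\<lambda>\<omega>. c + a * X \<omega> + b * Y \<omega>) Z = a * cov M X Z + b * cov M Y Z"
proof -
  have "(\<lambda>\<omega>. (c + a * X \<omega> + b * Y \<omega>) * Z \<omega>) = (\<lambda>\<omega>. c * Z \<omega> + a * (X \<omega> * Z \<omega>) + b * (Y \<omega> * Z \<omega>))"
    by (simp add: algebra_simps)
  then show ?thesis
    unfolding cov_eq_expectation[OF L2_affine[OF assms(1,2)] assms(3)]
    using assms L2_imp_integrable integrable_mult_L2[OF assms(1,3)] integrable_mult_L2[OF assms(2,3)]
    by (simp add: cov_eq_expectation prob_space algebra_simps)
qed

lemma cov_commute: "cov M X Y = cov M Y X"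
  unfolding cov_def by (simp add: mult.commute)

lemma cov_affine_right:
  assumes "L2 Z" "L2 X" "L2 Y"
  shows "cov M Z (\<lambda>\<omega>. c + a * X \<omega> + b * Y \<omega>) = a * cov M Z X + b * cov M Z Y"
  unfolding cov_commute[of Z] by (rule cov_affine_left[OF assms(2,3,1)])

lemma cov_self_nonneg: "cov M X X \<ge> 0"
  unfolding cov_def by simp

lemma variance_eq_cov: "variance X = cov M X X"
  unfolding cov_def by (simp add: power2_eq_square)

lemma abs_cov_le:
  assumes "L2 X" "L2 Y"
  shows "\<bar>cov M X Y\<bar> \<le> (variance X + variance Y) / 2"
proof -
  have expand: "cov M (\<lambda>\<omega>. 0 + 1 * X \<omega> + b * Y \<omega>) (\<lambda>\<omega>. 0 + 1 * X \<omega> + b * Y \<omega>)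
      = cov M X X + 2 * b * cov M X Y + b\<^sup>2 * cov M Y Y" for b
    unfolding cov_affine_left[OF assms L2_affine[OF assms]] cov_affine_right[OF assms(1) assms]
      cov_affine_right[OF assms(2) assms] cov_commute[of Y X]
    by (simp add: power2_eq_square algebra_simps)
  show ?thesis
    using expand[of 1] expand[of "-1"] cov_self_nonneg[of "\<lambda>\<omega>. 0 + 1 * X \<omega> + 1 * Y \<omega>"]
      cov_self_nonneg[of "\<lambda>\<omega>. 0 + 1 * X \<omega> + -1 * Y \<omega>"]
    by (simp add: variance_eq_cov abs_le_iff)
qed

lemma cov_cong_AE:
  assumes "AE \<omega> in M. X \<omega> = Y \<omega>"
    and "X \<in> borel_measurable M" "Y \<in> borel_measurable M" "Z \<in> borel_measurable M"
  shows "cov M X Z = cov M Y Z"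
proof -
  have "integral\<^sup>L M X = integral\<^sup>L M Y"
    using assms by (intro integral_cong_AE) auto
  then show ?thesis
    unfolding cov_def by (intro integral_cong_AE) (use assms in auto)
qed

lemma cov_indep_vars_zero:
  assumes indep: "indep_vars (\<lambda>_. borel) X I" and "s \<in> I" "u \<in> I" "s \<noteq> u"
    and L2: "L2 (X s)" "L2 (X u)"
  shows "cov M (X s) (X u) = 0"
proof -
  have "indep_vars (\<lambda>_. borel) X (insert s {u})"
    using assms by (intro indep_vars_subset[OF indep]) auto
  then have "indep_var borel (X s) borel (\<lambda>\<omega>. \<Sum>i\<in>{u}. X i \<omega>)"
    using \<open>s \<noteq> u\<close> by (intro indep_vars_sum) auto
  then have "expectation (\<lambda>\<omega>. X s \<omega> * X u \<omega>) = expectation (X s) * expectation (X u)"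
    using L2 by (intro indep_var_lebesgue_integral) (auto simp: L2_imp_integrable)
  then show ?thesis
    using cov_eq_expectation[OF L2] by simp
qed

end

locale ar1_process = prob_space +
  fixes D eps :: "int \<Rightarrow> 'a \<Rightarrow> real" and mu rho sigma :: real
  assumes stationary: "weakly_stationary M D"
    and abs_rho_less: "\<bar>rho\<bar> < 1"
    and L2_eps: "L2 (eps s)"
    and eps_uncorrelated: "s \<noteq> u \<Longrightarrow> cov M (eps s) (eps u) = 0"
    and variance_eps: "variance (eps s) = sigma\<^sup>2"
    and recursion: "AE \<omega> in M. D s \<omega> = mu + rho * (D (s - 1) \<omega> - mu) + eps s \<omega>"
begin

lemma L2_D: "L2 (D s)"
  using stationary unfolding weakly_stationary_def L2_def by auto

lemma variance_D: "variance (D s) = variance (D 0)"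
proof -
  have "cov M (D (s + 0)) (D s) = cov M (D (0 + 0)) (D 0)"
    using stationary unfolding weakly_stationary_def by blast
  then show ?thesis
    unfolding variance_eq_cov by simp
qed

lemma cov_D_left:
  assumes "L2 Z"
  shows "cov M (D s) Z = rho * cov M (D (s - 1)) Z + cov M (eps s) Z"
proof -
  have "cov M (D s) Z = cov M (\<lambda>\<omega>. (mu - rho * mu) + rho * D (s - 1) \<omega> + 1 * eps s \<omega>) Z"
  proof (rule cov_cong_AE)
    show "AE \<omega> in M. D s \<omega> = mu - rho * mu + rho * D (s - 1) \<omega> + 1 * eps s \<omega>"
      using recursion[of s] by (simp add: algebra_simps)
  qed (use L2_D L2_eps assms L2_affine[OF L2_D L2_eps, of "mu - rho * mu" rho "s - 1" 1 s]
      in \<open>auto simp: L2_def\<close>)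
  also have "\<dots> = rho * cov M (D (s - 1)) Z + cov M (eps s) Z"
    using cov_affine_left[OF L2_D L2_eps assms, of "mu - rho * mu" rho "s - 1" 1 s] by simp
  finally show ?thesis .
qed

lemma cov_eps_D_iterate:
  assumes "u < s"
  shows "cov M (eps s) (D u) = rho ^ K * cov M (eps s) (D (u - int K))"
proof (induction K)
  case (Suc K)
  have "cov M (eps s) (D (u - int K)) = rho * cov M (eps s) (D (u - int K - 1))"
    using cov_D_left[OF L2_eps, of "u - int K" s] eps_uncorrelated[of "u - int K" s] assms
    by (simp add: cov_commute[of "eps s"])
  with Suc show ?case
    by (simp add: algebra_simps)
qed simp

lemma cov_eps_past_D:
  assumes "u < s"
  shows "cov M (eps s) (D u) = 0"
proof -
  define B where "B = (sigma\<^sup>2 + variance (D 0)) / 2"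
  have bound: "\<bar>cov M (eps s) (D u)\<bar> \<le> \<bar>rho\<bar> ^ K * B" for K
  proof -
    have "\<bar>cov M (eps s) (D (u - int K))\<bar> \<le> B"
      using abs_cov_le[OF L2_eps L2_D] variance_eps variance_D unfolding B_def by metis
    then show ?thesis
      unfolding cov_eps_D_iterate[OF assms, of K] by (simp add: abs_mult power_abs mult_left_mono)
  qed
  have "(\<lambda>K. \<bar>rho\<bar> ^ K * B) \<longlonglongrightarrow> 0"
    using abs_rho_less by (intro tendsto_mult_left_zero LIMSEQ_power_zero) auto
  then have "\<bar>cov M (eps s) (D u)\<bar> \<le> 0"
    using bound by (intro LIMSEQ_le_const) auto
  then show ?thesis by simp
qed

lemma autocovariance: "cov M (D s) (D (s - int h)) = rho ^ h * variance (D 0)"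
proof (induction h arbitrary: s)
  case 0
  show ?case using variance_D[of s] by (simp add: variance_eq_cov)
next
  case (Suc h)
  have "cov M (D s) (D (s - int (Suc h)))
      = rho * cov M (D (s - 1)) (D (s - 1 - int h)) + cov M (eps s) (D (s - int (Suc h)))"
    using cov_D_left[OF L2_D, of s "s - int (Suc h)"] by (simp add: algebra_simps)
  with Suc cov_eps_past_D[of "s - int (Suc h)" s] show ?case by simp
qed

lemma variance_D_eq: "variance (D 0) * (1 - rho\<^sup>2) = sigma\<^sup>2"
proof -
  define v where "v = variance (D 0)"
  have "cov M (eps 0) (D 0) = sigma\<^sup>2"
    using cov_D_left[OF L2_eps, of 0 0] cov_eps_past_D[of "-1" 0] variance_eps[of 0]
      cov_commute[of "D (-1)" "eps 0"] cov_commute[of "eps 0" "D 0"]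
    by (simp add: variance_eq_cov)
  moreover have "cov M (D (-1)) (D 0) = rho * v"
    using autocovariance[of 0 1] cov_commute[of "D (-1)" "D 0"] unfolding v_def by simp
  ultimately have "v - rho * (rho * v) = sigma\<^sup>2"
    using cov_D_left[OF L2_D, of 0 0] unfolding v_def variance_eq_cov by simp
  then show ?thesis
    unfolding v_def[symmetric] by (simp add: power2_eq_square algebra_simps)
qed

lemma variance_D_pos:
  assumes "sigma \<noteq> 0"
  shows "variance (D s) > 0"
proof -
  have "1 - rho\<^sup>2 > 0"
    using abs_rho_less by (simp add: abs_square_less_1)
  moreover have "variance (D 0) * (1 - rho\<^sup>2) > 0"
    using variance_D_eq assms by simp
  ultimately show ?thesis
    using variance_D[of s] by (simp add: zero_less_mult_iff)
qed

lemma variance_lag_combination: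
  "variance (\<lambda>\<omega>. b * D s \<omega> + c * D (s - int h) \<omega>)
     = (b\<^sup>2 + c\<^sup>2 + 2 * b * c * rho ^ h) * variance (D 0)"
proof -
  define v where "v = variance (D 0)"
  let ?X = "D s" and ?Y = "D (s - int h)"
  let ?Q = "\<lambda>\<omega>. 0 + b * ?X \<omega> + c * ?Y \<omega>"
  have self: "cov M (D u) (D u) = v" for u
    using variance_D[of u] unfolding v_def variance_eq_cov .
  have "variance (\<lambda>\<omega>. b * ?X \<omega> + c * ?Y \<omega>) = cov M ?Q ?Q"
    using variance_eq_cov[of ?Q] by simp
  also have "\<dots> = b * cov M ?X ?Q + c * cov M ?Y ?Q"
    by (rule cov_affine_left[OF L2_D L2_D L2_affine[OF L2_D L2_D]])
  also have "\<dots> = b * (b * cov M ?X ?X + c * cov M ?X ?Y) + c * (b * cov M ?Y ?X + c * cov M ?Y ?Y)"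
    unfolding cov_affine_right[OF L2_D L2_D L2_D] ..
  also have "\<dots> = (b\<^sup>2 + c\<^sup>2 + 2 * b * c * rho ^ h) * v"
    using autocovariance[of s h] cov_commute[of ?Y ?X] unfolding self v_def[symmetric]
    by (simp add: power2_eq_square algebra_simps)
  finally show ?thesis
    unfolding v_def .
qed

end

lemma order_q_constant_lead_time:
  assumes "m \<ge> 1" and "\<And>s \<omega>. Lt s \<omega> = L"
  shows "order_q n m Lplus D Lt t \<omega>
    = (1 + real L / real n) * D (t - 1) \<omega> + (- real L / real n) * D (t - 1 - int n) \<omega>"
proof -
  have Lhat: "Lhat m Lplus Lt s \<omega> = real L" for s
    unfolding Lhat_def assms(2) using assms(1) by simp
  have "(\<Sum>i=1..n. D (t - int i) \<omega>) - (\<Sum>i=1..n. D (t - 1 - int i) \<omega>)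
      = (\<Sum>i=1..n. D (t - int i) \<omega> - D (t - int (Suc i)) \<omega>)"
    by (simp add: sum_subtractf algebra_simps)
  also have "\<dots> = D (t - 1) \<omega> - D (t - 1 - int n) \<omega>"
    using sum_Suc_diff'[of 1 "Suc n" "\<lambda>i. - D (t - int i) \<omega>"]
    by (simp add: atLeastLessThanSuc_atLeastAtMost algebra_simps)
  finally have telescope: "(\<Sum>i=1..n. D (t - int i) \<omega>) - (\<Sum>i=1..n. D (t - 1 - int i) \<omega>)
      = D (t - 1) \<omega> - D (t - 1 - int n) \<omega>" .
  have "order_q n m Lplus D Lt t \<omega> = real L / real n
      * ((\<Sum>i=1..n. D (t - int i) \<omega>) - (\<Sum>i=1..n. D (t - 1 - int i) \<omega>)) + D (t - 1) \<omega>"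
    unfolding order_q_def Lhat Dhat_def by (simp add: algebra_simps)
  then show ?thesis
    unfolding telescope by (simp add: algebra_simps)
qed

theorem mainTheorem5:
  fixes M :: "'a measure"
    and D eps :: "int \<Rightarrow> 'a \<Rightarrow> real"
    and Lt :: "int \<Rightarrow> 'a \<Rightarrow> nat"
    and muD rho sigma :: real
    and Lplus n m L :: nat
    and t :: int
  assumes M: "prob_space M"
    and rho: "-1 < rho" "rho < 1"
    and eps_meas: "\<And>s. eps s \<in> borel_measurable M"
    and eps_indep: "prob_space.indep_vars M (\<lambda>_. borel) eps UNIV"
    and eps_ident: "\<And>s u. distr M borel (eps s) = distr M borel (eps u)"
    and eps_sq: "\<And>s. integrable M (\<lambda>\<omega>. (eps s \<omega>)\<^sup>2)"
    and eps_mean: "\<And>s. prob_space.expectation M (eps s) = 0"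
    and eps_var: "\<And>s. prob_space.variance M (eps s) = sigma\<^sup>2"
    and sigma: "sigma > 0"
    and D_stat: "weakly_stationary M D"
    and D_ar: "\<And>s. AE \<omega> in M. D s \<omega> = muD + rho * (D (s - 1) \<omega> - muD) + eps s \<omega>"
    and n: "n \<ge> 1" and m: "m \<ge> 1"
    and Lt_range: "\<And>s \<omega>. Lt s \<omega> \<le> Lplus"
    and Lt_det: "\<And>s \<omega>. Lt s \<omega> = L"
  shows "prob_space.variance M (order_q n m Lplus D Lt t) / prob_space.variance M (D t)
           = (2 * real L ^ 2 / real n ^ 2 + 2 * real L / real n) * (1 - rho ^ n) + 1"
proof -
  interpret prob_space M by (rule M)
  have L2_eps: "L2 (eps s)" for s
    using eps_meas eps_sq unfolding L2_def by auto
  interpret ar1_process M D eps muD rho sigma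
  proof
    show "cov M (eps s) (eps u) = 0" if "s \<noteq> u" for s u
      using cov_indep_vars_zero[OF eps_indep _ _ that L2_eps L2_eps] by simp
  qed (use D_stat rho L2_eps eps_var D_ar in auto)
  define a where "a = real L / real n"
  have "order_q n m Lplus D Lt t = (\<lambda>\<omega>. (1 + a) * D (t - 1) \<omega> + (- a) * D (t - 1 - int n) \<omega>)"
    using order_q_constant_lead_time[of m Lt L, OF m Lt_det] unfolding a_def
    by (simp add: fun_eq_iff)
  then have "variance (order_q n m Lplus D Lt t)
      = ((1 + a)\<^sup>2 + a\<^sup>2 - 2 * a * (1 + a) * rho ^ n) * variance (D t)"
    using variance_lag_combination[of "1 + a" "t - 1" "- a" n] variance_D[of t] by simp
  then have "variance (order_q n m Lplus D Lt t) / variance (D t)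
      = (1 + a)\<^sup>2 + a\<^sup>2 - 2 * a * (1 + a) * rho ^ n"
    using variance_D_pos[of t] sigma by simp
  also have "\<dots> = (2 * real L ^ 2 / real n ^ 2 + 2 * real L / real n) * (1 - rho ^ n) + 1"
    unfolding a_def using n by (simp add: field_simps power2_eq_square)
  finally show ?thesis .
qed

end
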